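(* Consider the uncertain system \[ \dot x = f(x) + g(x)u + \varphi(x,u)\theta,\qquad \varphi(x,u)=[F(x)\;\; G(x)\,\mathrm{diag}(u)]\in\mathbb{R}^{n\times(p+m)}, \] with input $u\in\mathcal{U}\subseteq\mathbb{R}^m$, known locally Lipschitz $f,g$, known $F:\mathbb{R}^n\to\mathbb{R}^{n\times p}$, $G:\mathbb{R}^n\to\mathbb{R}^{n\times m}$, and unknown $\theta\in\mathbb{R}^{p+m}$ lying in a known hyperrectangle $\Theta=[\underline{\theta}_1,\overline{\theta}_1]\times\cdots\times[\underline{\theta}_{p+m},\overline{\theta}_{p+m}]$. Let $\{\Xi_k\}_{k\ge0}$ be the sequence of parameter sets generated by the integral set-membership identification scheme described below. Let $V:\mathbb{R}^n\to\mathbb{R}_{\ge0}$ be continuously differentiable and positive definite, $\mathcal{D}\subseteq\mathbb{R}^n$, and suppose there is a class $\mathcal{K}$ function $\gamma$ such that for all $x\in\mathcal{D}$ \[ \inf_{u\in\mathcal{U}}\sup_{\theta\in\Theta}\dot V(x,u,\theta)\le-\gamma(V(x)),\qquad \dot V(x,u,\theta)=L_fV(x)+L_gV(x)u+L_\varphi V(x,u)\theta. \] Then $\inf_{u\in\mathcal{U}}\sup_{\theta\in\Xi_k}\dot V(x,u,\theta)\le-\gamma(V(x))$ for all $x\in\mathcal{D}$ and all $k\in\mathbb{Z}_{\ge0}$.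
   Context: $L_fV=\nabla V\, f$, $L_gV=\nabla V\, g$, $L_\varphi V(x,u)=\nabla V(x)\varphi(x,u)$. Class $\mathcal{K}$: continuous strictly increasing $\gamma:[0,\infty)\to[0,\infty)$ with $\gamma(0)=0$. The identification scheme: let $x(\cdot)$ be a solution under an input signal $u(\cdot)$; fix $\Delta t>0$ and for $t\ge\Delta t$ let $\Delta x(t)=\int_{t-\Delta t}^t\dot x\,ds$, $\mathcal{F}(t)=\int_{t-\Delta t}^t f(x(s))ds$, $\mathcal{G}(t)=\int_{t-\Delta t}^t g(x(s))u(s)ds$, $\mathcal{S}(t)=\int_{t-\Delta t}^t\varphi(x(s),u(s))ds$. Let $\{t_k\}$ be strictly increasing with $t_0=0$; at time $t$ a history stack $\{\Delta x_j(t),\mathcal{F}_j(t),\mathcal{G}_j(t),\mathcal{S}_j(t)\}_{j\in\mathcal{M}(t)}$ consists of values of $(\Delta x,\mathcal{F},\mathcal{G},\mathcal{S})$ recorded at times in $[\Delta t,t]$. With $\varepsilon>0$, $\Xi_0=\Theta$, and for $k\ge1$, $\Xi_k=\prod_i[\underline\theta_i^k,\overline\theta_i^k]$ where $\underline\theta_i^k$ (resp. $\overline\theta_i^k$) is the minimum (resp. maximum) of $\theta_i$ over $\theta\in\Xi_{k-1}$ satisfying $-\varepsilon\mathbf{1}_n\le\Delta x_j(t_k)-\mathcal{F}_j(t_k)-\mathcal{G}_j(t_k)-\mathcal{S}_j(t_k)\theta\le\varepsilon\mathbf{1}_n$ for all $j\in\mathcal{M}(t_k)$ ($\mathbf{1}_n$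 the vector of ones, inequalities componentwise). *)

theory Defs
  imports "HOL-Analysis.Analysis"
begin

definition classK :: "(real \<Rightarrow> real) \<Rightarrow> bool" where
  "classK \<gamma> \<longleftrightarrow> continuous_on {0..} \<gamma> \<and> strict_mono_on {0..} \<gamma> \<and> \<gamma> 0 = 0
      \<and> (\<forall>r\<ge>0. \<gamma> r \<ge> 0)"

definition loc_lipschitz :: "('a::metric_space \<Rightarrow> 'b::metric_space) \<Rightarrow> bool" where
  "loc_lipschitz h \<longleftrightarrow> (\<forall>z. \<exists>r>0. \<exists>L. L-lipschitz_on (cball z r) h)"

text \<open>The regressor \<open>\<phi>(x,u) = [F(x)  G(x) diag(u)]\<close>, columns indexed by \<open>'p + 'm\<close>.\<close>
definition regressor ::
  "(real^'n::finite \<Rightarrow> real^'p::finite^'n) \<Rightarrow> (real^'n \<Rightarrow> real^'m::finite^'n)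
     \<Rightarrow> real^'n \<Rightarrow> real^'m \<Rightarrow> real^('p + 'm)^'n" where
  "regressor F G z v = (\<chi> i j. case j of Inl a \<Rightarrow> F z $ i $ a | Inr b \<Rightarrow> G z $ i $ b * v $ b)"

definition Vdot ::
  "(real^'n::finite \<Rightarrow> real^'n) \<Rightarrow> (real^'n \<Rightarrow> real^'n) \<Rightarrow> (real^'n \<Rightarrow> real^'m::finite^'n)
     \<Rightarrow> (real^'n \<Rightarrow> real^'m \<Rightarrow> real^'q::finite^'n) \<Rightarrow> real^'n \<Rightarrow> real^'m \<Rightarrow> real^'q \<Rightarrow> real" where
  "Vdot gradV f g \<phi> z v \<theta> =
     gradV z \<bullet> f z + (gradV z v* g z) \<bullet> v + (gradV z v* \<phi> z v) \<bullet> \<theta>"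

definition param_box :: "('q::finite \<Rightarrow> real) \<Rightarrow> ('q \<Rightarrow> real) \<Rightarrow> (real^'q) set" where
  "param_box lo hi = {\<theta>. \<forall>i. lo i \<le> \<theta> $ i \<and> \<theta> $ i \<le> hi i}"

definition consistent_set ::
  "real \<Rightarrow> (real \<Rightarrow> real^'n::finite) \<Rightarrow> (real \<Rightarrow> real^'n) \<Rightarrow> (real \<Rightarrow> real^'n)
     \<Rightarrow> (real \<Rightarrow> real^'q::finite^'n) \<Rightarrow> real set \<Rightarrow> (real^'q) set \<Rightarrow> (real^'q) set" where
  "consistent_set \<epsilon> dX FF GG SS R P =
     {\<theta> \<in> P. \<forall>s\<in>R. \<forall>l. - \<epsilon> \<le> (dX s - FF s - GG s - SS s *v \<theta>) $ l
                          \<and> (dX s - FF s - GG s - SS s *v \<theta>) $ l \<le> \<epsilon>}"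

text \<open>Integral set-membership identification: \<open>Xi 0 = \<Theta>\<close>, and \<open>Xi (k+1)\<close> is the box whose
  i-th side is [min, max] of \<open>\<theta>_i\<close> over the consistent parameters in \<open>Xi k\<close>, using the stack
  recorded at the times \<open>R (k+1)\<close> (the stack at time \<open>t_(k+1)\<close>).\<close>
fun ism_sets ::
  "real \<Rightarrow> (real \<Rightarrow> real^'n::finite) \<Rightarrow> (real \<Rightarrow> real^'n) \<Rightarrow> (real \<Rightarrow> real^'n)
     \<Rightarrow> (real \<Rightarrow> real^'q::finite^'n) \<Rightarrow> (nat \<Rightarrow> real set) \<Rightarrow> ('q \<Rightarrow> real) \<Rightarrow> ('q \<Rightarrow> real)
     \<Rightarrow> nat \<Rightarrow> (real^'q) set" where
  "ism_sets \<epsilon> dX FF GG SS R lo hi 0 = param_box lo hi"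
| "ism_sets \<epsilon> dX FF GG SS R lo hi (Suc k) =
     (let S = consistent_set \<epsilon> dX FF GG SS (R (Suc k)) (ism_sets \<epsilon> dX FF GG SS R lo hi k)
      in param_box (\<lambda>i. Inf ((\<lambda>\<theta>. \<theta> $ i) ` S)) (\<lambda>i. Sup ((\<lambda>\<theta>. \<theta> $ i) ` S)))"

end

theory Submission
  imports Defs
begin

text \<open>The true parameter \<open>\<theta>0\<close> satisfies the integrated dynamics exactly, so its residual on every
  stack entry is zero and it survives every consistency test. By induction every \<open>\<Xi>_k\<close> then
  contains \<open>\<theta>0\<close>, and taking coordinatewise bounds of a nonempty subset of \<open>\<Theta>\<close> stays inside \<open>\<Theta>\<close>;
  hence \<open>\<Xi>_k \<subseteq> \<Theta>\<close>, and a supremum over the smaller set can only decrease.\<close>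

lemma param_box_hull_subset:
  fixes S :: "(real^'q::finite) set"
  assumes "S \<noteq> {}" "S \<subseteq> param_box a b"
  shows "param_box (\<lambda>i. Inf ((\<lambda>\<theta>. \<theta> $ i) ` S)) (\<lambda>i. Sup ((\<lambda>\<theta>. \<theta> $ i) ` S)) \<subseteq> param_box a b"
proof
  fix y assume y: "y \<in> param_box (\<lambda>i. Inf ((\<lambda>\<theta>. \<theta> $ i) ` S)) (\<lambda>i. Sup ((\<lambda>\<theta>. \<theta> $ i) ` S))"
  show "y \<in> param_box a b" unfolding param_box_def
  proof (intro CollectI allI conjI)
    fix i
    have "a i \<le> Inf ((\<lambda>\<theta>. \<theta> $ i) ` S)"
      using assms by (intro cInf_greatest) (auto simp: param_box_def)
    then show "a i \<le> y $ i" using y by (auto simp: param_box_def intro: order_trans)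
    have "Sup ((\<lambda>\<theta>. \<theta> $ i) ` S) \<le> b i"
      using assms by (intro cSup_least) (auto simp: param_box_def)
    then show "y $ i \<le> b i" using y by (auto simp: param_box_def intro: order_trans)
  qed
qed

lemma mem_param_box_hull:
  fixes S :: "(real^'q::finite) set"
  assumes "\<theta> \<in> S" "S \<subseteq> param_box a b"
  shows "\<theta> \<in> param_box (\<lambda>i. Inf ((\<lambda>\<theta>. \<theta> $ i) ` S)) (\<lambda>i. Sup ((\<lambda>\<theta>. \<theta> $ i) ` S))"
  unfolding param_box_def
proof (intro CollectI allI conjI)
  fix i
  have "bdd_below ((\<lambda>\<theta>. \<theta> $ i) ` S)" "bdd_above ((\<lambda>\<theta>. \<theta> $ i) ` S)"
    using assms(2) unfolding param_box_def bdd_below_def bdd_above_def by blast+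
  then show "Inf ((\<lambda>\<theta>. \<theta> $ i) ` S) \<le> \<theta> $ i" "\<theta> $ i \<le> Sup ((\<lambda>\<theta>. \<theta> $ i) ` S)"
    using assms(1) by (auto intro: cInf_lower cSup_upper)
qed

lemma ism_sets_contain_param_within_box:
  assumes "\<theta>0 \<in> param_box lo hi"
    and consistent: "\<And>k s l. s \<in> R k \<Longrightarrow> \<bar>(dX s - FF s - GG s - SS s *v \<theta>0) $ l\<bar> \<le> \<epsilon>"
  shows "\<theta>0 \<in> ism_sets \<epsilon> dX FF GG SS R lo hi k \<and> ism_sets \<epsilon> dX FF GG SS R lo hi k \<subseteq> param_box lo hi"
proof (induction k)
  case 0
  then show ?case using assms(1) by simp
next
  case (Suc k)
  define S where "S = consistent_set \<epsilon> dX FF GG SS (R (Suc k)) (ism_sets \<epsilon> dX FF GG SS R lo hi k)"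
  have S_box: "S \<subseteq> param_box lo hi"
    using Suc.IH unfolding S_def consistent_set_def by auto
  have "- \<epsilon> \<le> (dX s - FF s - GG s - SS s *v \<theta>0) $ l \<and> (dX s - FF s - GG s - SS s *v \<theta>0) $ l \<le> \<epsilon>"
    if "s \<in> R (Suc k)" for s l
    using consistent[OF that, of l] by linarith
  then have "\<theta>0 \<in> S"
    using Suc.IH unfolding S_def consistent_set_def by blast
  moreover have "ism_sets \<epsilon> dX FF GG SS R lo hi (Suc k)
      = param_box (\<lambda>i. Inf ((\<lambda>\<theta>. \<theta> $ i) ` S)) (\<lambda>i. Sup ((\<lambda>\<theta>. \<theta> $ i) ` S))"
    by (simp add: S_def Let_def)
  ultimately show ?case
    using S_box param_box_hull_subset[of S lo hi] mem_param_box_hull[of \<theta>0 S lo hi] by auto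
qed

lemma bounded_linear_matrix_vector_mult_left:
  "bounded_linear (\<lambda>A::real^'a::finite^'b::finite. A *v v)"
proof -
  have "linear (\<lambda>A::real^'a::finite^'b::finite. A *v v)"
    by (simp add: linear_iff matrix_vector_mult_add_rdistrib matrix_vector_mult_def vec_eq_iff
        sum_distrib_left sum.distrib algebra_simps)
  then show ?thesis by (simp add: linear_conv_bounded_linear)
qed

lemma increment_eq_integral_regression:
  fixes y :: "real \<Rightarrow> real^'n::finite"
  assumes "a \<le> b"
    and deriv: "\<And>s. s \<in> {a..b} \<Longrightarrow>
      (y has_vector_derivative (p s + q s + M s *v \<theta>)) (at s within {a..b})"
    and p: "p integrable_on {a..b}" and q: "q integrable_on {a..b}"
    and M: "M integrable_on {a..b}"
  shows "y b - y a - integral {a..b} p - integral {a..b} q - integral {a..b} M *v \<theta> = 0"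
proof -
  note M_lin = bounded_linear_matrix_vector_mult_left[of \<theta>]
  have M\<theta>: "(\<lambda>s. M s *v \<theta>) integrable_on {a..b}"
    "integral {a..b} (\<lambda>s. M s *v \<theta>) = integral {a..b} M *v \<theta>"
    using integrable_linear[OF M M_lin] integral_linear[OF M M_lin] by (simp_all add: o_def)
  have "((\<lambda>s. p s + q s + M s *v \<theta>) has_integral (y b - y a)) {a..b}"
    using assms(1) deriv by (rule fundamental_theorem_of_calculus)
  then have "y b - y a = integral {a..b} (\<lambda>s. p s + q s + M s *v \<theta>)"
    by (rule integral_unique [symmetric])
  also have "\<dots> = integral {a..b} p + integral {a..b} q + integral {a..b} M *v \<theta>"
    using p q M\<theta> by (simp add: integral_add integrable_add)
  finally show ?thesis by (simp add: algebra_simps)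
qed

theorem proposition2:
  fixes f :: "real^'n::finite \<Rightarrow> real^'n"
    and g :: "real^'n \<Rightarrow> real^'m::finite^'n"
    and F :: "real^'n \<Rightarrow> real^'p::finite^'n"
    and G :: "real^'n \<Rightarrow> real^'m^'n"
    and \<theta>0 :: "real^('p + 'm)"
    and lo hi :: "'p + 'm \<Rightarrow> real"
    and U :: "(real^'m) set"
    and V :: "real^'n \<Rightarrow> real" and gradV :: "real^'n \<Rightarrow> real^'n"
    and D :: "(real^'n) set"
    and \<gamma> :: "real \<Rightarrow> real"
    and x :: "real \<Rightarrow> real^'n" and u :: "real \<Rightarrow> real^'m"
    and \<Delta>t \<epsilon> :: real
    and t :: "nat \<Rightarrow> real"
    and R :: "nat \<Rightarrow> real set"
  assumes f_lip: "loc_lipschitz f" and g_lip: "loc_lipschitz g"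
    and theta_in: "\<theta>0 \<in> param_box lo hi"
    and V_deriv: "\<And>z. (V has_derivative (\<lambda>h. gradV z \<bullet> h)) (at z)"
    and gradV_cont: "continuous_on UNIV gradV"
    and V_nonneg: "\<And>z. V z \<ge> 0"
    and V_pd: "V 0 = 0" "\<And>z. z \<noteq> 0 \<Longrightarrow> V z > 0"
    and gamma_K: "classK \<gamma>"
    and robust_clf: "\<And>z. z \<in> D \<Longrightarrow>
       Inf ((\<lambda>v. Sup ((\<lambda>\<theta>. ereal (Vdot gradV f g (regressor F G) z v \<theta>)) ` param_box lo hi)) ` U)
         \<le> ereal (- \<gamma> (V z))"
    and sol: "\<And>s. s \<ge> 0 \<Longrightarrow>
       (x has_vector_derivative (f (x s) + g (x s) *v u s + regressor F G (x s) (u s) *v \<theta>0))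
         (at s within {0..})"
    and int_f: "\<And>T. (\<lambda>s. f (x s)) integrable_on {0..T}"
    and int_g: "\<And>T. (\<lambda>s. g (x s) *v u s) integrable_on {0..T}"
    and int_phi: "\<And>T. (\<lambda>s. regressor F G (x s) (u s)) integrable_on {0..T}"
    and dt_pos: "\<Delta>t > 0"
    and eps_pos: "\<epsilon> > 0"
    and t_mono: "strict_mono t" and t0: "t 0 = 0"
    and R_fin: "\<And>k. finite (R k)"
    and R_sub: "\<And>k. R k \<subseteq> {\<Delta>t..t k}"
  shows "\<forall>k. \<forall>z\<in>D.
     Inf ((\<lambda>v. Sup ((\<lambda>\<theta>. ereal (Vdot gradV f g (regressor F G) z v \<theta>)) `
        ism_sets \<epsilon> (\<lambda>s. x s - x (s - \<Delta>t))
          (\<lambda>s. integral {s - \<Delta>t..s} (\<lambda>\<tau>. f (x \<tau>)))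
          (\<lambda>s. integral {s - \<Delta>t..s} (\<lambda>\<tau>. g (x \<tau>) *v u \<tau>))
          (\<lambda>s. integral {s - \<Delta>t..s} (\<lambda>\<tau>. regressor F G (x \<tau>) (u \<tau>)))
          R lo hi k)) ` U)
       \<le> ereal (- \<gamma> (V z))"
proof -
  have residual_zero:
    "x s - x (s - \<Delta>t) - integral {s - \<Delta>t..s} (\<lambda>\<tau>. f (x \<tau>))
       - integral {s - \<Delta>t..s} (\<lambda>\<tau>. g (x \<tau>) *v u \<tau>)
       - integral {s - \<Delta>t..s} (\<lambda>\<tau>. regressor F G (x \<tau>) (u \<tau>)) *v \<theta>0 = 0"
    if "s \<in> R k" for k s
  proof -
    have window: "{s - \<Delta>t..s} \<subseteq> {0..s}"
      using R_sub[of k] that by auto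
    show ?thesis
    proof (rule increment_eq_integral_regression)
      show "s - \<Delta>t \<le> s" using dt_pos by simp
      show "(x has_vector_derivative
          (f (x \<tau>) + g (x \<tau>) *v u \<tau> + regressor F G (x \<tau>) (u \<tau>) *v \<theta>0)) (at \<tau> within {s - \<Delta>t..s})"
        if "\<tau> \<in> {s - \<Delta>t..s}" for \<tau>
        using that window
        by (intro has_vector_derivative_within_subset[OF sol]) auto
    qed (use integrable_on_subinterval[OF _ window] int_f int_g int_phi in auto)
  qed
  let ?\<Xi> = "ism_sets \<epsilon> (\<lambda>s. x s - x (s - \<Delta>t))
    (\<lambda>s. integral {s - \<Delta>t..s} (\<lambda>\<tau>. f (x \<tau>)))
    (\<lambda>s. integral {s - \<Delta>t..s} (\<lambda>\<tau>. g (x \<tau>) *v u \<tau>))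
    (\<lambda>s. integral {s - \<Delta>t..s} (\<lambda>\<tau>. regressor F G (x \<tau>) (u \<tau>))) R lo hi"
  show ?thesis
  proof (intro allI ballI)
    fix k z assume "z \<in> D"
    have \<Xi>_subset: "?\<Xi> k \<subseteq> param_box lo hi"
      by (rule conjunct2[OF ism_sets_contain_param_within_box[OF theta_in]])
        (simp add: residual_zero eps_pos less_imp_le)
    show "Inf ((\<lambda>v. Sup ((\<lambda>\<theta>. ereal (Vdot gradV f g (regressor F G) z v \<theta>)) ` ?\<Xi> k)) ` U)
      \<le> ereal (- \<gamma> (V z))"
      by (rule order_trans[OF INF_mono robust_clf[OF \<open>z \<in> D\<close>]])
        (use \<Xi>_subset in \<open>auto intro!: SUP_subset_mono\<close>)
  qed
qed

end
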